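(* The enhanced power graph of the abelian group $\mathbf C_{30}\times\mathbf C_{30}$ is not perfect; more precisely, if $a_1,a_2$ are elements of order $2$, $b_1,b_2$ elements of order $3$, and $c_1,c_2$ elements of order $5$ with $\langle a_1,a_2\rangle$, $\langle b_1,b_2\rangle$, $\langle c_1,c_2\rangle$ non-cyclic, then the vertices $a_1b_1,\ b_1c_2,\ a_2,\ b_2,\ a_1c_1$ induce a $5$-cycle in $\mathcal G_e(\mathbf C_{30}\times\mathbf C_{30})$.
   Context: $\mathbf C_{30}$ is the cyclic group of order $30$. The enhanced power graph $\mathcal G_e(\mathbf G)$ has vertex set $G$, distinct $x,y$ adjacent iff $\langle x,y\rangle$ is cyclic. A graph is perfect if every induced subgraph has chromatic number equal to its clique number. *)

theory Defs
  imports "HOL-Algebra.Algebra"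
begin

abbreviation C :: "nat \<Rightarrow> int monoid" where
  "C n \<equiv> integer_mod_group n"

definition enhanced_power_adj :: "('a, 'b) monoid_scheme \<Rightarrow> 'a \<Rightarrow> 'a \<Rightarrow> bool" where
  "enhanced_power_adj G x y \<longleftrightarrow>
     x \<in> carrier G \<and> y \<in> carrier G \<and> x \<noteq> y \<and> cyclic_group (subgroup_generated G {x, y})"

definition is_clique :: "('v \<Rightarrow> 'v \<Rightarrow> bool) \<Rightarrow> 'v set \<Rightarrow> bool" where
  "is_clique E K \<longleftrightarrow> (\<forall>x\<in>K. \<forall>y\<in>K. x \<noteq> y \<longrightarrow> E x y)"

definition clique_number :: "('v \<Rightarrow> 'v \<Rightarrow> bool) \<Rightarrow> 'v set \<Rightarrow> nat" where
  "clique_number E S = Max {card K | K. K \<subseteq> S \<and> is_clique E K}"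

definition proper_colouring :: "('v \<Rightarrow> 'v \<Rightarrow> bool) \<Rightarrow> 'v set \<Rightarrow> nat \<Rightarrow> ('v \<Rightarrow> nat) \<Rightarrow> bool" where
  "proper_colouring E S k f \<longleftrightarrow>
     (\<forall>x\<in>S. f x < k) \<and> (\<forall>x\<in>S. \<forall>y\<in>S. x \<noteq> y \<and> E x y \<longrightarrow> f x \<noteq> f y)"

definition chromatic_number :: "('v \<Rightarrow> 'v \<Rightarrow> bool) \<Rightarrow> 'v set \<Rightarrow> nat" where
  "chromatic_number E S = (LEAST k. \<exists>f. proper_colouring E S k f)"

definition perfect_graph :: "'v set \<Rightarrow> ('v \<Rightarrow> 'v \<Rightarrow> bool) \<Rightarrow> bool" where
  "perfect_graph V E \<longleftrightarrow> (\<forall>S. S \<subseteq> V \<longrightarrow> chromatic_number E S = clique_number E S)"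

definition induces_cycle :: "('v \<Rightarrow> 'v \<Rightarrow> bool) \<Rightarrow> 'v list \<Rightarrow> bool" where
  "induces_cycle E vs \<longleftrightarrow> length vs \<ge> 3 \<and> distinct vs \<and>
     (\<forall>i<length vs. \<forall>j<length vs.
        E (vs ! i) (vs ! j) \<longleftrightarrow> (j = Suc i mod length vs \<or> i = Suc j mod length vs))"

end

theory Submission
  imports Defs
begin

(* Two distinct elements are adjacent in the enhanced power graph iff both are powers of a common
   element, and, since subgroups of cyclic groups are cyclic, they are non-adjacent as soon as some
   of their powers generate a non-cyclic subgroup. Writing every vertex as a product of its 2-, 3-
   and 5-parts, each edge of the pentagon a1b1, b1c2, a2, b2, a1c1 is witnessed by a common root and
   each non-edge by powers landing in one of the non-cyclic groups <a1,a2>, <b1,b2>, <c1,c2>.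
   A 5-cycle has chromatic number 3 and clique number 2; in C30 x C30 the axis elements (15,0),
   (0,15), (10,0), (0,10), (6,0), (0,6) satisfy the hypotheses. *)

context group begin

lemma nat_pow_in_subgroup:
  assumes "subgroup H G" "h \<in> H" shows "h [^] (n::nat) \<in> H"
  using subgroup_int_pow_closed[OF assms, of "int n"] by (simp add: int_pow_int)

lemma subgroup_of_generate_singleton_eq_generate_singleton:
  assumes fin: "finite (carrier G)" and g: "g \<in> carrier G"
    and K: "subgroup K G" "K \<subseteq> generate G {g}"
  shows "\<exists>h\<in>carrier G. K = generate G {h}"
proof -
  define N where "N = (LEAST n::nat. 0 < n \<and> g [^] n \<in> K)"
  have "0 < ord g \<and> g [^] ord g \<in> K"
    using ord_ge_1[OF fin g] subgroup.one_closed[OF K(1)] g by simp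
  then have N: "0 < N" "g [^] N \<in> K"
    unfolding N_def by (metis (mono_tags, lifting) LeastI)+
  have N_least: "g [^] r \<notin> K" if "0 < r" "r < N" for r
    using that unfolding N_def using not_less_Least by blast
  have "K \<subseteq> generate G {g [^] N}"
  proof
    fix h assume h: "h \<in> K"
    then obtain k where k: "h = g [^] (k::nat)"
      using K(2) generate_pow_on_finite_carrier[OF fin g] by auto
    have split: "g [^] k = (g [^] N) [^] (k div N) \<otimes> g [^] (k mod N)"
      using g by (metis div_mult_mod_eq mult.commute nat_pow_mult nat_pow_pow)
    have "(g [^] N) [^] (k div N) \<in> K"
      using nat_pow_in_subgroup[OF K(1) N(2)] .
    then have "g [^] (k mod N) \<in> K"
      using h k split g by (metis K(1) inv_solve_left nat_pow_closed subgroup.m_closed subgroup.m_inv_closed)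
    then have "k mod N = 0"
      using N_least N(1) by (meson mod_less_divisor neq0_conv)
    then show "h \<in> generate G {g [^] N}"
      using split k g nat_pow_in_subgroup[OF generate_is_subgroup generate.incl] by auto
  qed
  moreover have "generate G {g [^] N} \<subseteq> K"
    using generate_subgroup_incl N(2) K(1) by blast
  ultimately show ?thesis using g by blast
qed

lemma cyclic_group_subgroup_generated_if_subset_generate_singleton:
  assumes fin: "finite (carrier G)" and S: "S \<subseteq> carrier G" and g: "g \<in> carrier G"
    and sub: "generate G S \<subseteq> generate G {g}"
  shows "cyclic_group (subgroup_generated G S)"
proof -
  obtain h where h: "h \<in> carrier G" "generate G S = generate G {h}"
    using subgroup_of_generate_singleton_eq_generate_singleton[OF fin g generate_is_subgroup[OF S] sub] by blast
  then have "subgroup_generated G S = subgroup_generated G {h}"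
    using S by (simp add: subgroup_generated_def Int_absorb1)
  then show ?thesis using cyclic_group_generated by simp
qed

lemma generate_subset_generate_singleton_if_cyclic:
  assumes T: "T \<subseteq> carrier G" and cyc: "cyclic_group (subgroup_generated G T)"
  shows "\<exists>g\<in>carrier G. generate G T \<subseteq> generate G {g}"
proof -
  interpret H: group "subgroup_generated G T" by (rule group_subgroup_generated)
  have carrier_T: "carrier (subgroup_generated G T) = generate G T"
    by (simp add: carrier_subgroup_generated Int_absorb1 T)
  obtain x where x: "x \<in> carrier (subgroup_generated G T)"
    "carrier (subgroup_generated G T) = range (\<lambda>n::int. x [^]\<^bsub>subgroup_generated G T\<^esub> n)"
    using H.cyclic_group cyc by blast
  have xG: "x \<in> carrier G" using generate_in_carrier[OF T] x(1) carrier_T by simp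
  have "generate G T \<subseteq> generate G {x}"
    using x carrier_T int_pow_subgroup_generated[OF x(1)] generate_pow[OF xG] by auto
  then show ?thesis using xG by blast
qed

lemma cyclic_group_subgroup_generated_mono:
  assumes fin: "finite (carrier G)" and T: "T \<subseteq> carrier G" and S: "S \<subseteq> generate G T"
    and cyc: "cyclic_group (subgroup_generated G T)"
  shows "cyclic_group (subgroup_generated G S)"
proof -
  obtain g where g: "g \<in> carrier G" "generate G T \<subseteq> generate G {g}"
    using generate_subset_generate_singleton_if_cyclic[OF T cyc] by blast
  have "generate G S \<subseteq> generate G T"
    using generate_subgroup_incl[OF S generate_is_subgroup[OF T]] .
  moreover have "S \<subseteq> carrier G" using S generate_in_carrier[OF T] by blast
  ultimately show ?thesis
    using cyclic_group_subgroup_generated_if_subset_generate_singleton[OF fin _ g(1)] g(2) by blast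
qed

lemma nat_pow_eq_one_if_mod_ord:
  "x \<in> carrier G \<Longrightarrow> n mod ord x = 0 \<Longrightarrow> x [^] (n::nat) = \<one>"
  by (simp add: pow_eq_id mod_eq_0_iff_dvd)

lemma nat_pow_eq_self_if_mod_ord:
  assumes x: "x \<in> carrier G" and n: "n mod ord x = 1"
  shows "x [^] (n::nat) = x"
proof -
  have "x [^] n = (x [^] ord x) [^] (n div ord x) \<otimes> x [^] (n mod ord x)"
    using x by (metis div_mult_mod_eq mult.commute nat_pow_mult nat_pow_pow)
  then show ?thesis using x n by simp
qed

lemma enhanced_power_adj_powers:
  assumes fin: "finite (carrier G)" and z: "z \<in> carrier G"
    and x: "x = z [^] (m::nat)" and y: "y = z [^] (n::nat)" and "x \<noteq> y"
  shows "enhanced_power_adj G x y"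
proof -
  have "generate G {x, y} \<subseteq> generate G {z}"
    using x y z nat_pow_in_subgroup[OF generate_is_subgroup generate.incl]
    by (intro generate_subgroup_incl generate_is_subgroup) auto
  then have "cyclic_group (subgroup_generated G {x, y})"
    using cyclic_group_subgroup_generated_if_subset_generate_singleton[OF fin _ z] x y z by simp
  then show ?thesis unfolding enhanced_power_adj_def using x y z \<open>x \<noteq> y\<close> by simp
qed

lemma not_enhanced_power_adj_if_powers_not_cyclic:
  assumes fin: "finite (carrier G)" and xy: "x \<in> carrier G" "y \<in> carrier G"
    and not_cyc: "\<not> cyclic_group (subgroup_generated G {x [^] (m::nat), y [^] (n::nat)})"
  shows "\<not> enhanced_power_adj G x y"
proof
  assume "enhanced_power_adj G x y"
  then have cyc: "cyclic_group (subgroup_generated G {x, y})"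
    unfolding enhanced_power_adj_def by blast
  have "{x [^] m, y [^] n} \<subseteq> generate G {x, y}"
    using xy nat_pow_in_subgroup[OF generate_is_subgroup generate.incl] by auto
  then show False
    using cyclic_group_subgroup_generated_mono[OF fin _ _ cyc] xy not_cyc by auto
qed

end

lemma all_less_5_iff: "(\<forall>i<(5::nat). P i) \<longleftrightarrow> P 0 \<and> P 1 \<and> P 2 \<and> P 3 \<and> P 4"
  by (auto simp: less_Suc_eq eval_nat_numeral)

lemma induces_cycle_5I:
  assumes dist: "distinct [x0, x1, x2, x3, x4]"
    and sym: "\<And>x y. E x y \<Longrightarrow> E y x" and irrefl: "\<And>x. \<not> E x x"
    and edges: "E x0 x1" "E x1 x2" "E x2 x3" "E x3 x4" "E x4 x0"
    and non_edges: "\<not> E x0 x2" "\<not> E x0 x3" "\<not> E x1 x3" "\<not> E x1 x4" "\<not> E x2 x4"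
  shows "induces_cycle E [x0, x1, x2, x3, x4]"
proof -
  have len: "length [x0, x1, x2, x3, x4] = 5" by simp
  have "E x1 x0" "E x2 x1" "E x3 x2" "E x4 x3" "E x0 x4"
    "\<not> E x2 x0" "\<not> E x3 x0" "\<not> E x3 x1" "\<not> E x4 x1" "\<not> E x4 x2"
    using edges non_edges sym by blast+
  then show ?thesis
    unfolding induces_cycle_def len all_less_5_iff using dist edges non_edges irrefl by simp
qed

lemma five_cycle_chromatic_ne_clique_number:
  assumes "induces_cycle E [x0, x1, x2, x3, x4]"
  shows "chromatic_number E {x0, x1, x2, x3, x4} \<noteq> clique_number E {x0, x1, x2, x3, x4}"
proof -
  let ?S = "{x0, x1, x2, x3, x4}"
  have len: "length [x0, x1, x2, x3, x4] = 5" by simp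
  have dist: "distinct [x0, x1, x2, x3, x4]" and
    E: "E x0 x1" "E x1 x2" "E x2 x3" "E x3 x4" "E x4 x0"
    "E x1 x0" "E x2 x1" "E x3 x2" "E x4 x3" "E x0 x4"
    "\<not> E x0 x2" "\<not> E x0 x3" "\<not> E x1 x3" "\<not> E x1 x4" "\<not> E x2 x4"
    "\<not> E x2 x0" "\<not> E x3 x0" "\<not> E x3 x1" "\<not> E x4 x1" "\<not> E x4 x2"
    using assms unfolding induces_cycle_def len all_less_5_iff by simp_all
  define f where "f x = (if x = x0 \<or> x = x2 then 0 else if x = x1 \<or> x = x3 then 1 else 2::nat)" for x
  have "proper_colouring E ?S 3 f"
    unfolding proper_colouring_def f_def using dist E by auto
  moreover have "\<not> proper_colouring E ?S k g" if "k < 3" for k g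
  proof
    assume g: "proper_colouring E ?S k g"
    have "g x0 < 2" "g x1 < 2" "g x2 < 2" "g x3 < 2" "g x4 < 2"
      using g that unfolding proper_colouring_def by auto
    moreover have "g x0 \<noteq> g x1" "g x1 \<noteq> g x2" "g x2 \<noteq> g x3" "g x3 \<noteq> g x4" "g x4 \<noteq> g x0"
      using g E dist unfolding proper_colouring_def by auto
    ultimately show False by linarith
  qed
  ultimately have chromatic: "chromatic_number E ?S = 3"
    unfolding chromatic_number_def by (intro Least_equality) (auto simp: not_less[symmetric])
  have clique_card: "card K \<le> 2" if K: "K \<subseteq> ?S" "is_clique E K" for K
  proof (rule ccontr)
    assume "\<not> card K \<le> 2"
    then obtain T where "T \<subseteq> K" "card T = 3"
      using obtain_subset_with_card_n[of 3 K] by force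
    then obtain x y z where xyz: "{x, y, z} \<subseteq> K" "x \<noteq> y" "y \<noteq> z" "x \<noteq> z"
      unfolding card_3_iff by blast
    then have "x \<in> ?S" "y \<in> ?S" "z \<in> ?S" "E x y" "E y z" "E x z"
      using K unfolding is_clique_def by blast+
    then show False using E xyz(2-4) by auto
  qed
  have fin: "finite {card K | K. K \<subseteq> ?S \<and> is_clique E K}"
    by (rule finite_subset[of _ "card ` Pow ?S"]) auto
  have nonempty: "card {} \<in> {card K | K. K \<subseteq> ?S \<and> is_clique E K}"
    by (auto simp: is_clique_def intro!: exI[of _ "{}"])
  have "clique_number E ?S \<le> 2"
    unfolding clique_number_def using fin nonempty clique_card by (subst Max_le_iff) auto
  then show ?thesis using chromatic by simp
qed

lemma not_perfect_graph_if_induces_five_cycle: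
  assumes "induces_cycle E [x0, x1, x2, x3, x4]" "{x0, x1, x2, x3, x4} \<subseteq> V"
  shows "\<not> perfect_graph V E"
  using assms(2) five_cycle_chromatic_ne_clique_number[OF assms(1)]
  unfolding perfect_graph_def by blast

lemma (in comm_group) enhanced_power_graph_five_cycle:
  assumes fin: "finite (carrier G)"
    and car: "a1 \<in> carrier G" "a2 \<in> carrier G" "b1 \<in> carrier G" "b2 \<in> carrier G"
      "c1 \<in> carrier G" "c2 \<in> carrier G"
    and ord: "ord a1 = 2" "ord a2 = 2" "ord b1 = 3" "ord b2 = 3" "ord c1 = 5" "ord c2 = 5"
    and not_cyc: "\<not> cyclic_group (subgroup_generated G {a1, a2})"
      "\<not> cyclic_group (subgroup_generated G {b1, b2})"
      "\<not> cyclic_group (subgroup_generated G {c1, c2})"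
  shows "induces_cycle (enhanced_power_adj G) [a1 \<otimes> b1, b1 \<otimes> c2, a2, b2, a1 \<otimes> c1]"
proof -
  \<comment> \<open>15, 10 and 6 are 1 modulo one of 2, 3, 5 and 0 modulo the other two, so the powers
      x^15, x^10, x^6 extract the 2-, 3- and 5-parts of x.\<close>
  note pow_simps = nat_pow_distrib nat_pow_eq_one_if_mod_ord nat_pow_eq_self_if_mod_ord ord car
  have nontrivial: "a1 \<noteq> \<one>" "a2 \<noteq> \<one>" "b1 \<noteq> \<one>" "b2 \<noteq> \<one>" "c1 \<noteq> \<one>" "c2 \<noteq> \<one>"
    using ord_eq_1 car ord by auto
  have "(a1 \<otimes> b1) [^] (15::nat) = a1" "(a1 \<otimes> b1) [^] (10::nat) = b1" "(a1 \<otimes> b1) [^] (6::nat) = \<one>"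
    "(b1 \<otimes> c2) [^] (15::nat) = \<one>" "(b1 \<otimes> c2) [^] (10::nat) = b1" "(b1 \<otimes> c2) [^] (6::nat) = c2"
    "a2 [^] (15::nat) = a2" "a2 [^] (10::nat) = \<one>" "a2 [^] (6::nat) = \<one>"
    "b2 [^] (15::nat) = \<one>" "b2 [^] (10::nat) = b2" "b2 [^] (6::nat) = \<one>"
    "(a1 \<otimes> c1) [^] (15::nat) = a1" "(a1 \<otimes> c1) [^] (10::nat) = \<one>" "(a1 \<otimes> c1) [^] (6::nat) = c1"
    by (simp_all add: pow_simps)
  then have dist: "distinct [a1 \<otimes> b1, b1 \<otimes> c2, a2, b2, a1 \<otimes> c1]"
    using nontrivial by auto
  \<comment> \<open>The exponents of the common roots come from the Chinese remainder theorem.\<close>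
  have edge0: "enhanced_power_adj G (a1 \<otimes> b1) (b1 \<otimes> c2)"
    by (rule enhanced_power_adj_powers[OF fin, of "a1 \<otimes> b1 \<otimes> c2" _ 25 _ 16])
      (use dist in \<open>auto simp: pow_simps\<close>)
  have edge1: "enhanced_power_adj G (b1 \<otimes> c2) a2"
    by (rule enhanced_power_adj_powers[OF fin, of "a2 \<otimes> b1 \<otimes> c2" _ 16 _ 15])
      (use dist in \<open>auto simp: pow_simps\<close>)
  have edge2: "enhanced_power_adj G a2 b2"
    by (rule enhanced_power_adj_powers[OF fin, of "a2 \<otimes> b2" _ 3 _ 4])
      (use dist in \<open>auto simp: pow_simps\<close>)
  have edge3: "enhanced_power_adj G b2 (a1 \<otimes> c1)"
    by (rule enhanced_power_adj_powers[OF fin, of "a1 \<otimes> b2 \<otimes> c1" _ 10 _ 21])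
      (use dist in \<open>auto simp: pow_simps\<close>)
  have edge4: "enhanced_power_adj G (a1 \<otimes> c1) (a1 \<otimes> b1)"
    by (rule enhanced_power_adj_powers[OF fin, of "a1 \<otimes> b1 \<otimes> c1" _ 21 _ 25])
      (use dist in \<open>auto simp: pow_simps\<close>)
  have non_edge0: "\<not> enhanced_power_adj G (a1 \<otimes> b1) a2"
    by (rule not_enhanced_power_adj_if_powers_not_cyclic[OF fin, of "a1 \<otimes> b1" "a2" 3 1])
      (use not_cyc in \<open>simp_all add: pow_simps insert_commute\<close>)
  have non_edge1: "\<not> enhanced_power_adj G (a1 \<otimes> b1) b2"
    by (rule not_enhanced_power_adj_if_powers_not_cyclic[OF fin, of "a1 \<otimes> b1" "b2" 4 1])
      (use not_cyc in \<open>simp_all add: pow_simps insert_commute\<close>)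
  have non_edge2: "\<not> enhanced_power_adj G (b1 \<otimes> c2) b2"
    by (rule not_enhanced_power_adj_if_powers_not_cyclic[OF fin, of "b1 \<otimes> c2" "b2" 10 1])
      (use not_cyc in \<open>simp_all add: pow_simps insert_commute\<close>)
  have non_edge3: "\<not> enhanced_power_adj G (b1 \<otimes> c2) (a1 \<otimes> c1)"
    by (rule not_enhanced_power_adj_if_powers_not_cyclic[OF fin, of "b1 \<otimes> c2" "a1 \<otimes> c1" 6 6])
      (use not_cyc in \<open>simp_all add: pow_simps insert_commute\<close>)
  have non_edge4: "\<not> enhanced_power_adj G a2 (a1 \<otimes> c1)"
    by (rule not_enhanced_power_adj_if_powers_not_cyclic[OF fin, of "a2" "a1 \<otimes> c1" 1 5])
      (use not_cyc in \<open>simp_all add: pow_simps insert_commute\<close>)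
  show ?thesis
    by (rule induces_cycle_5I[OF dist _ _ edge0 edge1 edge2 edge3 edge4
          non_edge0 non_edge1 non_edge2 non_edge3 non_edge4])
      (auto simp: enhanced_power_adj_def insert_commute)
qed

lemma comm_group_DirProd:
  assumes "comm_group G" "comm_group H"
  shows "comm_group (G \<times>\<times> H)"
proof -
  interpret G: comm_group G by (fact assms(1))
  interpret H: comm_group H by (fact assms(2))
  interpret group "G \<times>\<times> H" by (intro DirProd_group G.is_group H.is_group)
  show ?thesis
    by (rule group_comm_groupI) (auto simp: mult_DirProd' G.m_comm H.m_comm)
qed

lemma nat_pow_DirProd:
  "(x, y) [^]\<^bsub>G \<times>\<times> H\<^esub> (n::nat) = (x [^]\<^bsub>G\<^esub> n, y [^]\<^bsub>H\<^esub> n)"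
  by (induction n) (simp_all add: nat_pow_def)

(* The points (m, 0) and (0, m) of (Z/qmZ)^2 are not both multiples of one point (u, v). *)
lemma axes_not_multiples_of_one_element:
  fixes k l u v q m :: int
  assumes coprime: "coprime q m" and q: "1 < q"
    and "q * m dvd k * u - m" "q * m dvd k * v" "q * m dvd l * u" "q * m dvd l * v - m"
  shows False
proof -
  have "m \<noteq> 0" using coprime q by auto
  have "q * m dvd k * (l * u)" "q * m dvd l * (k * u - m)"
    using assms(3,5) by simp_all
  then have "q * m dvd k * (l * u) - l * (k * u - m)" by (rule dvd_diff)
  then have "q * m dvd l * m" by (simp add: algebra_simps)
  then have "q dvd l" using \<open>m \<noteq> 0\<close> by (simp add: mult.commute)
  then have "q dvd l * v" by simp
  moreover have "q dvd l * v - m" using assms(6) dvd_mult_left by blast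
  ultimately have "q dvd l * v - (l * v - m)" by (rule dvd_diff)
  then have "q dvd m" by simp
  then show False using coprime_common_divisor[OF coprime dvd_refl] q by simp
qed

lemma not_cyclic_subgroup_generated_axes:
  assumes n: "n = q * m" and coprime: "coprime q m" and q: "1 < q" and m: "0 < m"
  shows "\<not> cyclic_group (subgroup_generated (C n \<times>\<times> C n) {(int m, 0), (0, int m)})"
proof
  interpret comm_group "C n \<times>\<times> C n" by (intro comm_group_DirProd abelian_integer_mod_group)
  assume cyc: "cyclic_group (subgroup_generated (C n \<times>\<times> C n) {(int m, 0), (0, int m)})"
  have "m < n" using n q m by simp
  then have axes: "{(int m, 0), (0, int m)} \<subseteq> carrier (C n \<times>\<times> C n)"
    by (auto simp: carrier_integer_mod_group)
  have fin: "finite (carrier (C n \<times>\<times> C n))"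
    using \<open>m < n\<close> by (simp add: carrier_integer_mod_group)
  obtain g where g: "g \<in> carrier (C n \<times>\<times> C n)"
      "generate (C n \<times>\<times> C n) {(int m, 0), (0, int m)} \<subseteq> generate (C n \<times>\<times> C n) {g}"
    using generate_subset_generate_singleton_if_cyclic[OF axes cyc] by blast
  obtain u v where uv: "g = (u, v)" by force
  have "(int m, 0) \<in> generate (C n \<times>\<times> C n) {g}" "(0, int m) \<in> generate (C n \<times>\<times> C n) {g}"
    using g(2) generate.incl[of _ "{(int m, 0), (0, int m)}"] by auto
  then obtain k l :: nat where
    "(int m, 0) = g [^]\<^bsub>C n \<times>\<times> C n\<^esub> k" "(0, int m) = g [^]\<^bsub>C n \<times>\<times> C n\<^esub> l"
    using generate_pow_on_finite_carrier[OF fin g(1)] by auto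
  then have "(int k * u) mod int n = int m mod int n" "int n dvd int k * v"
    "int n dvd int l * u" "(int l * v) mod int n = int m mod int n"
    using \<open>m < n\<close> by (simp_all add: uv nat_pow_DirProd flip: mod_eq_0_iff_dvd)
  then have "int q * int m dvd int k * u - int m" "int q * int m dvd int k * v"
    "int q * int m dvd int l * u" "int q * int m dvd int l * v - int m"
    by (simp_all only: mod_eq_dvd_iff n of_nat_mult)
  then show False
    using axes_not_multiples_of_one_element[of "int q" "int m"] coprime q by simp
qed

lemma ord_axes:
  assumes n: "n = q * m" and q: "1 < q" and m: "0 < m"
  shows "group.ord (C n \<times>\<times> C n) (int m, 0) = q" "group.ord (C n \<times>\<times> C n) (0, int m) = q"
proof -
  interpret group "C n \<times>\<times> C n" by (intro DirProd_group group_integer_mod_group)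
  have "m < n" using n q m by simp
  have "(int k * int m) mod int n = 0 \<longleftrightarrow> q dvd k" for k
    using m by (simp add: n mod_eq_0_iff_dvd flip: of_nat_mult)
  then show "ord (int m, 0) = q" "ord (0, int m) = q"
    using \<open>m < n\<close> by (simp_all add: ord_unique carrier_integer_mod_group nat_pow_DirProd)
qed

theorem mainTheorem7:
  shows "\<not> perfect_graph (carrier (C 30 \<times>\<times> C 30)) (enhanced_power_adj (C 30 \<times>\<times> C 30))
    \<and> (\<forall>a1 a2 b1 b2 c1 c2.
          a1 \<in> carrier (C 30 \<times>\<times> C 30) \<and> a2 \<in> carrier (C 30 \<times>\<times> C 30) \<and>
          b1 \<in> carrier (C 30 \<times>\<times> C 30) \<and> b2 \<in> carrier (C 30 \<times>\<times> C 30) \<and>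
          c1 \<in> carrier (C 30 \<times>\<times> C 30) \<and> c2 \<in> carrier (C 30 \<times>\<times> C 30) \<and>
          group.ord (C 30 \<times>\<times> C 30) a1 = 2 \<and> group.ord (C 30 \<times>\<times> C 30) a2 = 2 \<and>
          group.ord (C 30 \<times>\<times> C 30) b1 = 3 \<and> group.ord (C 30 \<times>\<times> C 30) b2 = 3 \<and>
          group.ord (C 30 \<times>\<times> C 30) c1 = 5 \<and> group.ord (C 30 \<times>\<times> C 30) c2 = 5 \<and>
          \<not> cyclic_group (subgroup_generated (C 30 \<times>\<times> C 30) {a1, a2}) \<and>
          \<not> cyclic_group (subgroup_generated (C 30 \<times>\<times> C 30) {b1, b2}) \<and>
          \<not> cyclic_group (subgroup_generated (C 30 \<times>\<times> C 30) {c1, c2})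
        \<longrightarrow> induces_cycle (enhanced_power_adj (C 30 \<times>\<times> C 30))
              [a1 \<otimes>\<^bsub>C 30 \<times>\<times> C 30\<^esub> b1, b1 \<otimes>\<^bsub>C 30 \<times>\<times> C 30\<^esub> c2, a2, b2,
               a1 \<otimes>\<^bsub>C 30 \<times>\<times> C 30\<^esub> c1])"
proof -
  interpret comm_group "C 30 \<times>\<times> C 30" by (intro comm_group_DirProd abelian_integer_mod_group)
  have fin: "finite (carrier (C 30 \<times>\<times> C 30))" by (simp add: carrier_integer_mod_group)
  note five_cycle = enhanced_power_graph_five_cycle[OF fin]
  have "induces_cycle (enhanced_power_adj (C 30 \<times>\<times> C 30))
    [(15, 0) \<otimes>\<^bsub>C 30 \<times>\<times> C 30\<^esub> (10, 0), (10, 0) \<otimes>\<^bsub>C 30 \<times>\<times> C 30\<^esub> (0, 6), (0, 15), (0, 10),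
     (15, 0) \<otimes>\<^bsub>C 30 \<times>\<times> C 30\<^esub> (6, 0)]"
    by (rule five_cycle)
      (simp_all add: carrier_integer_mod_group coprime_iff_gcd_eq_1 gcd_non_0_nat
        ord_axes[of 30 2 15, simplified] ord_axes[of 30 3 10, simplified]
        ord_axes[of 30 5 6, simplified] not_cyclic_subgroup_generated_axes[of 30 2 15, simplified]
        not_cyclic_subgroup_generated_axes[of 30 3 10, simplified]
        not_cyclic_subgroup_generated_axes[of 30 5 6, simplified])
  then have "\<not> perfect_graph (carrier (C 30 \<times>\<times> C 30)) (enhanced_power_adj (C 30 \<times>\<times> C 30))"
    by (rule not_perfect_graph_if_induces_five_cycle) (simp add: carrier_integer_mod_group)
  then show ?thesis using five_cycle by blast
qed

end
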